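(* Let $\mathcal{M}$ be a separable metric space, $f:\mathcal{M}\to\mathcal{M}$ continuous, and $\mathcal{X}\subseteq\mathcal{M}$ forward invariant under $f$ and path connected, with $\mathcal{W}$ the set of $\omega$-limit sets of $x_{k+1}=f(x_k)$ on $\mathcal{X}$. Suppose there exist a separable metric space $\mathcal{Z}$, a continuous $g:\mathcal{Z}\to\mathcal{Z}$ such that $z_{k+1}=g(z_k)$ has closed basins, and a continuous map $F:\mathcal{X}\to\mathcal{Z}$ with $F\circ f=g\circ F$ on $\mathcal{X}$; that every trajectory on $\mathcal{X}$ is forward precompact in $\mathcal{X}$; and that $\mathcal{W}$ is countable. If $F$ is one-to-one, then $\mathcal{W}$ has exactly one element.
   Context: Forward orbit of $\xi$: $\{f^k(\xi)\mid k\in\mathbb{N}\}$; forward precompact in $\mathcal{X}$ means its closure in $\mathcal{X}$ is compact. $\omega_{\mathcal{X}}(\xi)$ is the set of $x\in\mathcal{X}$ with $f^{k_j}(\xi)\to x$ for some $k_j\to\infty$; $\mathcal{W}=\{\omega_{\mathcal{X}}(\xi)\mid\xi\in\mathcal{X}\}$. For $g$ on $\mathcal{Z}$, $\omega$-limit sets are defined analogously; domain of attraction $D^+_{\mathcal{Z}}(\Omega)=\{\zeta\in\mathcal{Z}\mid\omega_{\mathcal{Z}}(\zeta)=\Omega\}$; closed basins means every such domain of attraction is closed. *)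

theory Defs
  imports "HOL-Analysis.Analysis"
begin

definition omega_limit :: "('a::topological_space \<Rightarrow> 'a) \<Rightarrow> 'a set \<Rightarrow> 'a \<Rightarrow> 'a set" where
  "omega_limit f S xi =
     {x \<in> S. \<exists>k::nat \<Rightarrow> nat. filterlim k at_top sequentially \<and>
                 ((\<lambda>j. (f ^^ k j) xi) \<longlongrightarrow> x) sequentially}"

definition omega_limit_sets :: "('a::topological_space \<Rightarrow> 'a) \<Rightarrow> 'a set \<Rightarrow> 'a set set" where
  "omega_limit_sets f S = {omega_limit f S xi | xi. xi \<in> S}"

definition forward_orbit :: "('a \<Rightarrow> 'a) \<Rightarrow> 'a \<Rightarrow> 'a set" where
  "forward_orbit f xi = {(f ^^ k) xi | k. True}"

definition domain_of_attraction :: "('a::topological_space \<Rightarrow> 'a) \<Rightarrow> 'a set \<Rightarrow> 'a set \<Rightarrow> 'a set" where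
  "domain_of_attraction g Z Omega = {z \<in> Z. omega_limit g Z z = Omega}"

definition closed_basins :: "('a::topological_space \<Rightarrow> 'a) \<Rightarrow> bool" where
  "closed_basins g \<longleftrightarrow> (\<forall>Omega \<in> omega_limit_sets g UNIV. closed (domain_of_attraction g UNIV Omega))"

end

theory Submission
  imports Defs
begin

text \<open>Since orbits in X are precompact, F maps the omega-limit set of x under f onto that of
  F x under g; as F is injective, two points of X have the same omega-limit set under f exactly
  when their images lie in the same domain of attraction of g. With closed basins and F continuous,
  the partition of X by omega-limit sets therefore consists of countably many relatively closed
  sets. Pulled back along a path, it becomes a countable partition of [0, 1] into closed sets,
  which by Sierpinski's theorem has a single member; as X is path connected, all omega-limit sets
  coincide.\<close>

lemma countable_closed_fibres_imp_constant_on_interval: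
  fixes h :: "real \<Rightarrow> 'b"
  assumes "a \<le> b" "countable (h ` {a..b})"
    and closed_fibres: "\<And>y. closed {t \<in> {a..b}. h t = y}"
    and "t \<in> {a..b}"
  shows "h t = h a"
proof -
  define \<U> where "\<U> = (\<lambda>y. {t \<in> {a..b}. h t = y}) ` h ` {a..b}"
  have "\<U> = {{a..b}}"
  proof (rule real_Sierpinski_lemma)
    show "countable \<U>"
      unfolding \<U>_def using assms(2) by blast
    show "pairwise disjnt \<U>"
      unfolding \<U>_def pairwise_def disjnt_def by auto
    show "closed C \<and> C \<noteq> {}" if "C \<in> \<U>" for C
      using that closed_fibres unfolding \<U>_def by blast
    show "\<Union>\<U> = {a..b}"
      unfolding \<U>_def by blast
  qed (use assms(1) in simp)
  moreover have "{s \<in> {a..b}. h s = h t} \<in> \<U>"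
    unfolding \<U>_def using assms(4) by blast
  ultimately have "{s \<in> {a..b}. h s = h t} = {a..b}"
    by blast
  then have "a \<in> {s \<in> {a..b}. h s = h t}"
    using assms(1) by simp
  then show ?thesis
    by simp
qed

lemma path_connected_countable_closedin_fibres_imp_constant:
  assumes "path_connected S" "countable (h ` S)"
    and closedin_fibres: "\<And>y. closedin (top_of_set S) {x \<in> S. h x = y}"
    and "x \<in> S" "y \<in> S"
  shows "h x = h y"
proof -
  obtain p where p: "path p" "path_image p \<subseteq> S" "pathstart p = y" "pathfinish p = x"
    using assms(1,4,5) unfolding path_connected_def by blast
  have pS: "p \<in> {0..1} \<rightarrow> S"
    using p(2) unfolding path_image_def by blast
  have "closed {t \<in> {0..1}. h (p t) = v}" for v
  proof -
    have "closedin (top_of_set {0..1}) ({0..1} \<inter> p -` {x \<in> S. h x = v})"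
      using continuous_closedin_preimage_gen p(1) pS closedin_fibres unfolding path_def by blast
    moreover have "{0..1} \<inter> p -` {x \<in> S. h x = v} = {t \<in> {0..1}. h (p t) = v}"
      using pS by auto
    ultimately show ?thesis
      using closedin_closed_trans by fastforce
  qed
  moreover have "countable ((h \<circ> p) ` {0..1})"
    using pS by (intro countable_subset[OF _ assms(2)]) auto
  ultimately have "(h \<circ> p) 1 = (h \<circ> p) 0"
    by (intro countable_closed_fibres_imp_constant_on_interval) auto
  then show ?thesis
    using p(3,4) by (simp add: pathstart_def pathfinish_def)
qed

lemma funpow_in_invariant_set:
  assumes "f ` X \<subseteq> X" "x \<in> X"
  shows "(f ^^ k) x \<in> X"
  using assms by (induction k) auto

lemma funpow_semiconj_on:
  assumes "f ` X \<subseteq> X" "\<forall>x\<in>X. F (f x) = g (F x)" "x \<in> X"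
  shows "F ((f ^^ k) x) = (g ^^ k) (F x)"
  using assms by (induction k) (auto simp: funpow_in_invariant_set)

lemma omega_limit_subset: "omega_limit f X x \<subseteq> X"
  unfolding omega_limit_def by blast

lemma image_omega_limit_subset:
  assumes inv: "f ` X \<subseteq> X" and contF: "continuous_on X F"
    and conj: "\<forall>x\<in>X. F (f x) = g (F x)" and x: "x \<in> X"
  shows "F ` omega_limit f X x \<subseteq> omega_limit g UNIV (F x)"
proof
  fix z assume "z \<in> F ` omega_limit f X x"
  then obtain y k where y: "y \<in> X" "z = F y" and k: "filterlim k at_top sequentially"
    and lim: "((\<lambda>j. (f ^^ k j) x) \<longlongrightarrow> y) sequentially"
    unfolding omega_limit_def by blast
  have "((\<lambda>j. F ((f ^^ k j) x)) \<longlongrightarrow> F y) sequentially"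
    using continuous_on_tendsto_compose[OF contF lim y(1)]
    by (simp add: funpow_in_invariant_set[OF inv x])
  then have "((\<lambda>j. (g ^^ k j) (F x)) \<longlongrightarrow> z) sequentially"
    by (simp add: funpow_semiconj_on[OF inv conj x] y(2))
  with k show "z \<in> omega_limit g UNIV (F x)"
    unfolding omega_limit_def by blast
qed

lemma omega_limit_convergent_subseq:
  fixes f :: "'a::first_countable_topology \<Rightarrow> 'a"
  assumes cpt: "compact (X \<inter> closure (forward_orbit f x))"
    and inv: "f ` X \<subseteq> X" and x: "x \<in> X" and k: "filterlim k at_top sequentially"
  obtains y r where "y \<in> omega_limit f X x" "strict_mono r"
    "((\<lambda>j. (f ^^ k (r j)) x) \<longlongrightarrow> y) sequentially"
proof -
  have "(f ^^ k j) x \<in> forward_orbit f x" for j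
    unfolding forward_orbit_def by blast
  then have "\<forall>j. (f ^^ k j) x \<in> X \<inter> closure (forward_orbit f x)"
    using funpow_in_invariant_set[OF inv x] closure_subset by blast
  then obtain y r where y: "y \<in> X" "strict_mono r"
    and lim: "((\<lambda>j. (f ^^ k j) x) \<circ> r) \<longlonglongrightarrow> y"
    by (rule seq_compactE[OF compact_imp_seq_compact[OF cpt]]) blast
  have "filterlim (k \<circ> r) at_top sequentially"
    using filterlim_compose[OF k filterlim_subseq[OF y(2)]] by (simp add: comp_def)
  with y(1) lim have "y \<in> omega_limit f X x"
    unfolding omega_limit_def comp_def by blast
  with y(2) lim show ?thesis
    using that by (simp add: comp_def)
qed

lemma omega_limit_subset_image:
  fixes F :: "'a::first_countable_topology \<Rightarrow> 'b::t2_space"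
  assumes cpt: "compact (X \<inter> closure (forward_orbit f x))"
    and inv: "f ` X \<subseteq> X" and contF: "continuous_on X F"
    and conj: "\<forall>x\<in>X. F (f x) = g (F x)" and x: "x \<in> X"
  shows "omega_limit g UNIV (F x) \<subseteq> F ` omega_limit f X x"
proof
  fix z assume "z \<in> omega_limit g UNIV (F x)"
  then obtain k where k: "filterlim k at_top sequentially"
    and lim_z: "((\<lambda>j. (g ^^ k j) (F x)) \<longlongrightarrow> z) sequentially"
    unfolding omega_limit_def by blast
  obtain y r where y: "y \<in> omega_limit f X x" and r: "strict_mono r"
    and lim_y: "((\<lambda>j. (f ^^ k (r j)) x) \<longlongrightarrow> y) sequentially"
    using omega_limit_convergent_subseq[OF cpt inv x k] by blast
  have "((\<lambda>j. F ((f ^^ k (r j)) x)) \<longlongrightarrow> F y) sequentially"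
    using continuous_on_tendsto_compose[OF contF lim_y] y omega_limit_subset[of f X x]
    by (auto simp: funpow_in_invariant_set[OF inv x])
  then have "((\<lambda>j. (g ^^ k (r j)) (F x)) \<longlongrightarrow> F y) sequentially"
    by (simp add: funpow_semiconj_on[OF inv conj x])
  moreover have "((\<lambda>j. (g ^^ k (r j)) (F x)) \<longlongrightarrow> z) sequentially"
    using LIMSEQ_subseq_LIMSEQ[OF lim_z r] by (simp add: comp_def)
  ultimately have "z = F y"
    using LIMSEQ_unique by blast
  with y show "z \<in> F ` omega_limit f X x"
    by blast
qed

lemma omega_limit_semiconj:
  fixes F :: "'a::first_countable_topology \<Rightarrow> 'b::t2_space"
  assumes "compact (X \<inter> closure (forward_orbit f x))"
    and "f ` X \<subseteq> X" "continuous_on X F" "\<forall>x\<in>X. F (f x) = g (F x)" "x \<in> X"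
  shows "omega_limit g UNIV (F x) = F ` omega_limit f X x"
  using image_omega_limit_subset[OF assms(2-5)] omega_limit_subset_image[OF assms] by blast

lemma omega_limit_eq_iff_injective_semiconj:
  fixes F :: "'a::first_countable_topology \<Rightarrow> 'b::t2_space"
  assumes precpt: "\<forall>x\<in>X. compact (X \<inter> closure (forward_orbit f x))"
    and inv: "f ` X \<subseteq> X" and contF: "continuous_on X F"
    and conj: "\<forall>x\<in>X. F (f x) = g (F x)" and injF: "inj_on F X"
    and x: "x \<in> X" and y: "y \<in> X"
  shows "omega_limit f X x = omega_limit f X y \<longleftrightarrow>
    omega_limit g UNIV (F x) = omega_limit g UNIV (F y)"
  using omega_limit_semiconj[OF _ inv contF conj x] omega_limit_semiconj[OF _ inv contF conj y]
    precpt x y inj_on_image_eq_iff[OF injF omega_limit_subset omega_limit_subset] by simp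

lemma closedin_omega_limit_fibre:
  fixes F :: "'a::first_countable_topology \<Rightarrow> 'b::t2_space"
  assumes precpt: "\<forall>x\<in>X. compact (X \<inter> closure (forward_orbit f x))"
    and inv: "f ` X \<subseteq> X" and contF: "continuous_on X F"
    and conj: "\<forall>x\<in>X. F (f x) = g (F x)" and injF: "inj_on F X"
    and basins: "closed_basins g"
  shows "closedin (top_of_set X) {x \<in> X. omega_limit f X x = W}"
proof (cases "\<exists>x0\<in>X. omega_limit f X x0 = W")
  case True
  then obtain x0 where x0: "x0 \<in> X" "omega_limit f X x0 = W"
    by blast
  define \<Omega> where "\<Omega> = omega_limit g UNIV (F x0)"
  have "F x \<in> domain_of_attraction g UNIV \<Omega> \<longleftrightarrow> omega_limit f X x = W"
    if "x \<in> X" for x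
    using omega_limit_eq_iff_injective_semiconj[OF precpt inv contF conj injF that x0(1)]
    unfolding domain_of_attraction_def \<Omega>_def x0(2) by simp
  then have fibre_eq: "{x \<in> X. omega_limit f X x = W} = X \<inter> F -` domain_of_attraction g UNIV \<Omega>"
    by blast
  have "\<Omega> \<in> omega_limit_sets g UNIV"
    unfolding omega_limit_sets_def \<Omega>_def by blast
  then have "closed (domain_of_attraction g UNIV \<Omega>)"
    using basins unfolding closed_basins_def by blast
  then show ?thesis
    unfolding fibre_eq by (rule continuous_closedin_preimage[OF contF])
next
  case False
  then have "{x \<in> X. omega_limit f X x = W} = {}"
    by blast
  then show ?thesis
    by (metis closedin_empty)
qed

theorem corollary21:
  fixes f :: "'m::metric_space \<Rightarrow> 'm"
    and X :: "'m set"
    and g :: "'z::metric_space \<Rightarrow> 'z"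
    and F :: "'m \<Rightarrow> 'z"
  assumes sepM: "separable_space (euclidean :: 'm topology)"
    and contf: "continuous_on UNIV f"
    and invX: "f ` X \<subseteq> X"
    and pcX: "path_connected X"
    and neX: "X \<noteq> {}"
    and sepZ: "separable_space (euclidean :: 'z topology)"
    and contg: "continuous_on UNIV g"
    and basins: "closed_basins g"
    and contF: "continuous_on X F"
    and conj: "\<forall>x\<in>X. F (f x) = g (F x)"
    and precpt: "\<forall>xi\<in>X. compact (X \<inter> closure (forward_orbit f xi))"
    and cntW: "countable (omega_limit_sets f X)"
    and injF: "inj_on F X"
  shows "\<exists>W. omega_limit_sets f X = {W}"
proof -
  obtain x0 where x0: "x0 \<in> X"
    using neX by blast
  have W_eq: "omega_limit_sets f X = omega_limit f X ` X"
    unfolding omega_limit_sets_def by blast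
  have "omega_limit f X x = omega_limit f X x0" if "x \<in> X" for x
    using cntW unfolding W_eq
    by (rule path_connected_countable_closedin_fibres_imp_constant[OF pcX _
          closedin_omega_limit_fibre[OF precpt invX contF conj injF basins] that x0])
  then have "omega_limit f X ` X = {omega_limit f X x0}"
    using x0 by blast
  then show ?thesis
    unfolding W_eq by blast
qed

end
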